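(* For every real $x>1$ and every $n\in\mathbb N$, $$\Phi^*_n(x)=\prod_{j=1}^n\left(x^{(j,n)_*}-1\right)^{\cos(2\pi j/n)}.$$
   Context: $d\mid\mid n$ means $d\mid n$ and $\gcd(d,n/d)=1$; $(j,n)_*=\max\{d: d\mid j,\ d\mid\mid n\}$; $\Phi^*_n(x)=\prod_{1\le j\le n,\ (j,n)_*=1}(x-e^{2\pi i j/n})$. Real powers of positive reals are the usual ones. *)

theory Defs
  imports Complex_Main "HOL-Computational_Algebra.Polynomial"
begin

definition unitary_dvd :: "nat \<Rightarrow> nat \<Rightarrow> bool" where
  "unitary_dvd d n \<longleftrightarrow> d dvd n \<and> coprime d (n div d)"

definition unitary_gcd :: "nat \<Rightarrow> nat \<Rightarrow> nat" where
  "unitary_gcd j n = Max {d. d dvd j \<and> unitary_dvd d n}"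

definition unitary_cyclotomic :: "nat \<Rightarrow> complex poly" where
  "unitary_cyclotomic n =
     (\<Prod>j\<in>{j\<in>{1..n}. unitary_gcd j n = 1}. [:- cis (2 * pi * real j / real n), 1:])"

end

theory Submission
  imports Defs "HOL-Computational_Algebra.Primes" "HOL-Computational_Algebra.Fundamental_Theorem_Algebra"
    "HOL-Analysis.Complex_Transcendental"
begin

text \<open>
  The unitary divisors of \<open>n\<close> are the products \<open>d V\<close> of the full prime powers of \<open>n\<close> over
  sets \<open>V\<close> of its prime factors, and \<open>(j,n)\<^sub>*\<close> is \<open>d V\<close> for the set \<open>V\<close> of primes whose full
  power in \<open>n\<close> divides \<open>j\<close>. Moebius inversion on the Boolean lattice of these sets turns a sum
  over the \<open>j\<close> with a prescribed \<open>V\<close> into an alternating sum of sums over the multiples of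
  unitary divisors, and over the multiples of \<open>c = n / m\<close> the points \<open>cis (2 pi j / n)\<close> run
  through the \<open>m\<close>-th roots of unity. Taking logarithms, both sides become
  \<open>\<Sum>V. (-1) ^ card (I - V) * ln (x ^ d V - 1)\<close>: on the left because the product of
  \<open>x - z\<close> over the \<open>m\<close>-th roots of unity \<open>z\<close> is \<open>x ^ m - 1\<close>, on the right because the sum of
  their real parts is \<open>1\<close> for \<open>m = 1\<close> and \<open>0\<close> otherwise.
\<close>

section \<open>Unitary divisors as sets of prime factors\<close>

definition prime_power_part :: "nat \<Rightarrow> nat \<Rightarrow> nat" where
  "prime_power_part n p = p ^ multiplicity p n"

definition unitary_part :: "nat \<Rightarrow> nat set \<Rightarrow> nat" where
  "unitary_part n V = (\<Prod>p\<in>V. prime_power_part n p)"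

definition unitary_support :: "nat \<Rightarrow> nat \<Rightarrow> nat set" where
  "unitary_support n j = {p \<in> prime_factors n. prime_power_part n p dvd j}"

lemma coprime_prime_power_part:
  assumes "p \<in> prime_factors n" "q \<in> prime_factors n" "p \<noteq> q"
  shows "coprime (prime_power_part n p) (prime_power_part n q)"
  using assms by (simp add: prime_power_part_def primes_coprime in_prime_factors_iff)

lemma prime_power_part_gt_1:
  assumes "p \<in> prime_factors n"
  shows "prime_power_part n p > 1"
  using assms unfolding prime_power_part_def
  by (intro one_less_power) (auto simp: prime_gt_Suc_0_nat prime_factors_multiplicity)

lemma unitary_part_pos:
  assumes "V \<subseteq> prime_factors n"
  shows "unitary_part n V > 0"
  using assms prime_power_part_gt_1 unfolding unitary_part_def
  by (intro prod_pos) fastforce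

lemma unitary_part_dvd_iff:
  assumes "V \<subseteq> prime_factors n"
  shows "unitary_part n V dvd j \<longleftrightarrow> (\<forall>p\<in>V. prime_power_part n p dvd j)"
proof -
  have "finite V"
    using assms finite_subset by blast
  then show ?thesis
    using assms
  proof (induction V rule: finite_induct)
    case empty
    then show ?case by (simp add: unitary_part_def)
  next
    case (insert p V)
    then have "coprime (prime_power_part n p) (unitary_part n V)"
      unfolding unitary_part_def by (intro prod_coprime_right coprime_prime_power_part) auto
    moreover have "unitary_part n (insert p V) = prime_power_part n p * unitary_part n V"
      using insert by (simp add: unitary_part_def)
    ultimately show ?case
      using insert by (auto intro: divides_mult dvd_mult_left dvd_mult_right)
  qed
qed

lemma unitary_part_mult_complement:
  assumes "n > 0" "V \<subseteq> prime_factors n"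
  shows "unitary_part n V * unitary_part n (prime_factors n - V) = n"
proof -
  have "unitary_part n (prime_factors n) = n"
    using assms(1) prime_factorization_nat by (simp add: unitary_part_def prime_power_part_def)
  moreover have "unitary_part n (prime_factors n) = unitary_part n (prime_factors n - V) * unitary_part n V"
    unfolding unitary_part_def using assms by (intro prod.subset_diff) auto
  ultimately show ?thesis
    by (simp add: mult.commute)
qed

lemma unitary_part_eq_1_iff:
  assumes "V \<subseteq> prime_factors n"
  shows "unitary_part n V = 1 \<longleftrightarrow> V = {}"
proof
  assume "unitary_part n V = 1"
  moreover have "finite V"
    using assms finite_subset by blast
  ultimately have "\<forall>p\<in>V. prime_power_part n p = 1"
    unfolding unitary_part_def using prod_eq_1_iff by metis
  then show "V = {}"
    using assms prime_power_part_gt_1 by fastforce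
qed (simp add: unitary_part_def)

lemma unitary_dvd_unitary_part:
  assumes "n > 0" "V \<subseteq> prime_factors n"
  shows "unitary_dvd (unitary_part n V) n"
proof -
  have "n div unitary_part n V = unitary_part n (prime_factors n - V)"
    using unitary_part_mult_complement[OF assms] unitary_part_pos[OF assms(2)]
    by (metis nonzero_mult_div_cancel_left not_gr0)
  moreover have "coprime (unitary_part n V) (unitary_part n (prime_factors n - V))"
    unfolding unitary_part_def using assms(2)
    by (intro prod_coprime_left prod_coprime_right coprime_prime_power_part) auto
  ultimately show ?thesis
    unfolding unitary_dvd_def using unitary_part_mult_complement[OF assms] by (metis dvd_triv_left)
qed

lemma multiplicity_unitary_dvd:
  assumes "unitary_dvd d n" "n > 0" "prime p" "p dvd d"
  shows "multiplicity p d = multiplicity p n"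
proof -
  have d: "d dvd n" "coprime d (n div d)"
    using assms(1) by (auto simp: unitary_dvd_def)
  then have "d \<noteq> 0" "n div d \<noteq> 0"
    using assms(2) by auto
  have "\<not> p dvd n div d"
    using coprime_common_divisor[OF d(2) assms(4)] assms(3) not_prime_unit by blast
  then have "multiplicity p (n div d) = 0"
    by (rule not_dvd_imp_multiplicity_0)
  moreover have "multiplicity p n = multiplicity p d + multiplicity p (n div d)"
    using prime_elem_multiplicity_mult_distrib[of p d "n div d"] assms(3) \<open>d \<noteq> 0\<close> \<open>n div d \<noteq> 0\<close> d(1)
    by simp
  ultimately show ?thesis
    by simp
qed

lemma unitary_dvd_eq_unitary_part:
  assumes "unitary_dvd d n" "n > 0"
  shows "d = unitary_part n (prime_factors d)"
proof -
  have "d > 0"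
    using assms by (auto simp: unitary_dvd_def intro: Nat.gr0I)
  then have "d = (\<Prod>p\<in>prime_factors d. p ^ multiplicity p d)"
    using prime_factorization_nat by blast
  also have "\<dots> = unitary_part n (prime_factors d)"
    unfolding unitary_part_def prime_power_part_def
    using multiplicity_unitary_dvd[OF assms] by (intro prod.cong) (auto simp: in_prime_factors_iff)
  finally show ?thesis .
qed

lemma unitary_gcd_eq_unitary_part:
  assumes "n > 0"
  shows "unitary_gcd j n = unitary_part n (unitary_support n j)"
proof -
  define G where "G = unitary_part n (unitary_support n j)"
  define A where "A = {d. d dvd j \<and> unitary_dvd d n}"
  have V: "unitary_support n j \<subseteq> prime_factors n"
    by (auto simp: unitary_support_def)
  have "G \<in> A"
    using unitary_dvd_unitary_part[OF assms V] unitary_part_dvd_iff[OF V]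
    by (auto simp: A_def G_def unitary_support_def)
  moreover have "d \<le> G" if "d \<in> A" for d
  proof -
    have d: "d dvd j" "unitary_dvd d n"
      using that by (auto simp: A_def)
    then have dn: "d dvd n"
      by (simp add: unitary_dvd_def)
    have "prime_power_part n p dvd j" if "p \<in> prime_factors d" for p
      using multiplicity_unitary_dvd[OF d(2) assms, of p] that multiplicity_dvd[of p d] d(1)
      by (auto simp: prime_power_part_def in_prime_factors_iff intro: dvd_trans)
    then have "prime_factors d \<subseteq> unitary_support n j"
      using dvd_prime_factors[OF _ dn] assms by (auto simp: unitary_support_def)
    then have "unitary_part n (prime_factors d) dvd G"
      unfolding G_def unitary_part_def using V
      by (intro prod_dvd_prod_subset) (auto intro: finite_subset)
    then show ?thesis
      using unitary_dvd_eq_unitary_part[OF d(2) assms] unitary_part_pos[OF V]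
      by (auto simp: G_def intro: dvd_imp_le)
  qed
  moreover have "finite A"
    using assms by (intro finite_subset[of A "{..n}"]) (auto simp: A_def unitary_dvd_def intro: dvd_imp_le)
  ultimately show ?thesis
    unfolding unitary_gcd_def A_def[symmetric] G_def[symmetric] by (intro Max_eqI)
qed

lemma unitary_gcd_eq_1_iff:
  assumes "n > 0"
  shows "unitary_gcd j n = 1 \<longleftrightarrow> unitary_support n j = {}"
  using unitary_gcd_eq_unitary_part[OF assms] unitary_part_eq_1_iff
  by (simp add: unitary_support_def)

section \<open>Roots of unity\<close>

lemma bij_betw_roots_unity_atLeastAtMost:
  assumes "m > 0"
  shows "bij_betw (\<lambda>k. cis (2 * pi * real k / real m)) {1..m} {z. z ^ m = 1}"
proof -
  have "bij_betw (\<lambda>k. if k = m then 0 else k) {1..m} {..<m}"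
    by (rule bij_betw_byWitness[where f' = "\<lambda>k. if k = 0 then m else k"]) (use assms in auto)
  from bij_betw_trans[OF this Complex.bij_betw_roots_unity[OF assms]] show ?thesis
    by (rule bij_betw_cong[THEN iffD1, rotated]) (use assms in simp)
qed

lemma prod_diff_roots_unity:
  fixes w :: complex
  assumes "m > 0"
  shows "(\<Prod>z | z ^ m = 1. w - z) = w ^ m - 1"
proof -
  define p :: "complex poly" where "p = monom 1 m - 1"
  have poly_p: "poly p z = z ^ m - 1" for z
    by (simp add: p_def poly_monom)
  have "poly (pderiv p) z = of_nat m * z ^ (m - 1)" for z
    by (simp add: p_def pderiv_diff pderiv_monom poly_monom)
  then have "rsquarefree p"
    using assms by (auto simp: rsquarefree_roots poly_p power_0_left)
  have "coeff p m = 1"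
    using assms by (simp add: p_def coeff_monom)
  moreover have "degree p \<le> m"
    unfolding p_def by (intro degree_diff_le) (auto simp: degree_monom_le)
  ultimately have "lead_coeff p = 1"
    using le_degree[of p m] by simp
  then have "(\<Prod>z | poly p z = 0. [:-z, 1:]) = p"
    using complex_poly_decompose_rsquarefree[OF \<open>rsquarefree p\<close>] by simp
  from arg_cong[OF this, of "\<lambda>q. poly q w"] show ?thesis
    by (simp add: poly_prod poly_p)
qed

lemma prod_diff_cis:
  fixes w :: complex
  assumes "m > 0"
  shows "(\<Prod>k=1..m. w - cis (2 * pi * real k / real m)) = w ^ m - 1"
  using prod.reindex_bij_betw[OF bij_betw_roots_unity_atLeastAtMost[OF assms], of "\<lambda>z. w - z"]
    prod_diff_roots_unity[OF assms] by simp

lemma sum_cos_roots_unity: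
  assumes "m > 0"
  shows "(\<Sum>k=1..m. cos (2 * pi * real k / real m)) = (if m = 1 then 1 else 0)"
proof (cases "m = 1")
  case False
  have "(\<Sum>k=1..m. cis (2 * pi * real k / real m)) = \<Sum>{z::complex. z ^ m = 1}"
    using sum.reindex_bij_betw[OF bij_betw_roots_unity_atLeastAtMost[OF assms], of "\<lambda>z. z"] .
  also have "\<dots> = 0"
    using False assms by (intro sum_roots_unity) simp
  finally have "Re (\<Sum>k=1..m. cis (2 * pi * real k / real m)) = 0"
    by simp
  then show ?thesis
    using False by (simp add: Re_sum)
qed simp

lemma bij_betw_mult_atLeastAtMost:
  fixes c m :: nat
  assumes "c > 0"
  shows "bij_betw (\<lambda>k. c * k) {1..m} {j \<in> {1..c * m}. c dvd j}"
proof (rule bij_betwI[where g = "\<lambda>j. j div c"])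
  show "(\<lambda>j. j div c) \<in> {j \<in> {1..c * m}. c dvd j} \<rightarrow> {1..m}"
    using assms by (auto elim!: dvdE)
qed (use assms in auto)

lemma prod_diff_cis_multiples:
  fixes w :: complex
  assumes "c * m = n" "n > 0"
  shows "(\<Prod>j \<in> {j \<in> {1..n}. c dvd j}. w - cis (2 * pi * real j / real n)) = w ^ m - 1"
proof -
  have "c > 0" "m > 0"
    using assms by auto
  have "(\<Prod>j \<in> {j \<in> {1..c * m}. c dvd j}. w - cis (2 * pi * real j / real (c * m))) =
      (\<Prod>k=1..m. w - cis (2 * pi * real (c * k) / real (c * m)))"
    by (rule prod.reindex_bij_betw[OF bij_betw_mult_atLeastAtMost[OF \<open>c > 0\<close>], symmetric])
  also have "\<dots> = w ^ m - 1"
    using prod_diff_cis[OF \<open>m > 0\<close>, of w] \<open>c > 0\<close> by (simp add: mult.assoc)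
  finally show ?thesis
    unfolding assms(1) .
qed

lemma sum_cos_multiples:
  assumes "c * m = n" "n > 0"
  shows "(\<Sum>j \<in> {j \<in> {1..n}. c dvd j}. cos (2 * pi * real j / real n)) = (if m = 1 then 1 else 0)"
proof -
  have "c > 0" "m > 0"
    using assms by auto
  have "(\<Sum>j \<in> {j \<in> {1..c * m}. c dvd j}. cos (2 * pi * real j / real (c * m))) =
      (\<Sum>k=1..m. cos (2 * pi * real (c * k) / real (c * m)))"
    by (rule sum.reindex_bij_betw[OF bij_betw_mult_atLeastAtMost[OF \<open>c > 0\<close>], symmetric])
  also have "\<dots> = (if m = 1 then 1 else 0)"
    using sum_cos_roots_unity[OF \<open>m > 0\<close>] \<open>c > 0\<close> by (simp add: mult.assoc)
  finally show ?thesis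
    unfolding assms(1) .
qed

section \<open>Inclusion-exclusion over subsets\<close>

lemma sum_Pow_neg_one_power:
  assumes "finite S"
  shows "(\<Sum>W\<in>Pow S. (-1::'a::comm_ring_1) ^ card W) = (if S = {} then 1 else 0)"
proof -
  have "(\<Prod>x\<in>S. (-1::'a) + 1) = (\<Sum>W\<in>Pow S. (\<Prod>x\<in>W. -1) * (\<Prod>x\<in>S - W. 1))"
    by (rule prod_add[OF assms])
  then show ?thesis
    using assms by (auto simp: power_0_left card_gt_0_iff)
qed

lemma sum_fiber_inclusion_exclusion:
  fixes U :: "'j \<Rightarrow> 'p set" and \<phi> :: "'j \<Rightarrow> 'a::comm_ring_1"
  assumes "finite I" "finite J" "\<And>j. j \<in> J \<Longrightarrow> U j \<subseteq> I" "T \<subseteq> I"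
  shows "(\<Sum>j \<in> {j \<in> J. U j = T}. \<phi> j) =
    (\<Sum>W\<in>Pow (I - T). (-1) ^ card W * (\<Sum>j \<in> {j \<in> J. T \<union> W \<subseteq> U j}. \<phi> j))"
proof -
  have alternating: "(\<Sum>W\<in>Pow (I - T). if T \<union> W \<subseteq> U j then (-1) ^ card W else 0) =
      (if U j = T then 1 else (0::'a))" if "j \<in> J" for j
  proof (cases "T \<subseteq> U j")
    case True
    have "{W \<in> Pow (I - T). T \<union> W \<subseteq> U j} = Pow (U j - T)"
      using assms(3)[OF that] True by auto
    then have "(\<Sum>W\<in>Pow (I - T). if T \<union> W \<subseteq> U j then (-1) ^ card W else 0) =
        (\<Sum>W\<in>Pow (U j - T). (-1::'a) ^ card W)"
      using assms(1) by (simp add: sum.inter_filter[symmetric])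
    also have "\<dots> = (if U j = T then 1 else 0)"
      using True assms(1) assms(3)[OF that] by (subst sum_Pow_neg_one_power) (auto intro: finite_subset)
    finally show ?thesis .
  qed (auto intro!: sum.neutral)
  have "(\<Sum>W\<in>Pow (I - T). (-1) ^ card W * (\<Sum>j \<in> {j \<in> J. T \<union> W \<subseteq> U j}. \<phi> j)) =
      (\<Sum>W\<in>Pow (I - T). \<Sum>j\<in>J. (-1) ^ card W * (if T \<union> W \<subseteq> U j then \<phi> j else 0))"
    using assms(2) by (simp add: sum.inter_filter sum_distrib_left)
  also have "\<dots> = (\<Sum>j\<in>J. (\<Sum>W\<in>Pow (I - T). if T \<union> W \<subseteq> U j then (-1) ^ card W else 0) * \<phi> j)"
    by (subst sum.swap) (auto simp: sum_distrib_right intro!: sum.cong)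
  also have "\<dots> = (\<Sum>j\<in>J. if U j = T then \<phi> j else 0)"
    by (intro sum.cong refl) (simp only: alternating, simp)
  also have "\<dots> = (\<Sum>j \<in> {j \<in> J. U j = T}. \<phi> j)"
    using assms(2) by (simp add: sum.inter_filter)
  finally show ?thesis ..
qed

section \<open>Both sides as alternating sums of logarithms\<close>

lemma subset_unitary_support_iff:
  assumes "V \<subseteq> prime_factors n"
  shows "V \<subseteq> unitary_support n j \<longleftrightarrow> unitary_part n V dvd j"
  using assms by (auto simp: unitary_support_def unitary_part_dvd_iff)

lemma sum_cos_unitary_support:
  assumes "n > 0" "T \<subseteq> prime_factors n"
  shows "(\<Sum>j \<in> {j \<in> {1..n}. unitary_support n j = T}. cos (2 * pi * real j / real n)) =
    (-1) ^ card (prime_factors n - T)"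
proof -
  let ?I = "prime_factors n"
  have "(\<Sum>j \<in> {j \<in> {1..n}. unitary_support n j = T}. cos (2 * pi * real j / real n)) =
      (\<Sum>W\<in>Pow (?I - T). (-1) ^ card W *
         (\<Sum>j \<in> {j \<in> {1..n}. T \<union> W \<subseteq> unitary_support n j}. cos (2 * pi * real j / real n)))"
    using assms(2) by (intro sum_fiber_inclusion_exclusion) (auto simp: unitary_support_def)
  also have "\<dots> = (\<Sum>W\<in>Pow (?I - T). if W = ?I - T then (-1) ^ card W else 0)"
  proof (intro sum.cong refl)
    fix W
    assume "W \<in> Pow (?I - T)"
    then have V: "T \<union> W \<subseteq> ?I" and "?I - (T \<union> W) = {} \<longleftrightarrow> W = ?I - T"
      using assms(2) by auto
    moreover have "unitary_part n (?I - (T \<union> W)) = 1 \<longleftrightarrow> ?I - (T \<union> W) = {}"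
      by (rule unitary_part_eq_1_iff) auto
    ultimately have "unitary_part n (?I - (T \<union> W)) = 1 \<longleftrightarrow> W = ?I - T"
      by simp
    then have "(\<Sum>j \<in> {j \<in> {1..n}. unitary_part n (T \<union> W) dvd j}. cos (2 * pi * real j / real n)) =
        (if W = ?I - T then 1 else 0)"
      using sum_cos_multiples[OF unitary_part_mult_complement[OF assms(1) V] assms(1)] by simp
    then show "(-1) ^ card W *
        (\<Sum>j \<in> {j \<in> {1..n}. T \<union> W \<subseteq> unitary_support n j}. cos (2 * pi * real j / real n)) =
        (if W = ?I - T then (-1) ^ card W else 0)"
      unfolding subset_unitary_support_iff[OF V] by simp
  qed
  also have "\<dots> = (-1) ^ card (?I - T)"
    by simp
  finally show ?thesis .
qed

lemma exp_mult_neg_one_power_cong: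
  fixes a b :: "'a::{real_normed_field,banach}"
  assumes "exp a = exp b"
  shows "exp ((-1) ^ k * a) = exp ((-1) ^ k * b)"
  using assms by (cases "even k") (simp_all add: exp_minus)

lemma poly_unitary_cyclotomic_of_real:
  assumes "n > 0" "x > 1"
  shows "poly (unitary_cyclotomic n) (of_real x) = of_real (exp
    (\<Sum>W\<in>Pow (prime_factors n). (-1) ^ card W * ln (x ^ unitary_part n (prime_factors n - W) - 1)))"
proof -
  let ?I = "prime_factors n"
  \<comment> \<open>Only exponentials of sums of these logarithms occur, so the branch of \<open>Ln\<close> is irrelevant.\<close>
  define f where "f j = Ln (of_real x - cis (2 * pi * real j / real n))" for j
  have "of_real x \<noteq> cis (2 * pi * real j / real n)" for j
    using assms(2) by (metis norm_cis norm_of_real abs_of_pos less_numeral_extra(1) less_irrefl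
        order.strict_trans)
  then have exp_f: "exp (f j) = of_real x - cis (2 * pi * real j / real n)" for j
    by (simp add: f_def)
  have multiples: "exp (\<Sum>j \<in> {j \<in> {1..n}. unitary_part n W dvd j}. f j) =
      exp (of_real (ln (x ^ unitary_part n (?I - W) - 1)))" if "W \<subseteq> ?I" for W
  proof -
    have "x ^ unitary_part n (?I - W) > 1"
      using assms(2) unitary_part_pos[of "?I - W" n] by (auto intro: one_less_power)
    then have "exp (complex_of_real (ln (x ^ unitary_part n (?I - W) - 1))) =
        of_real x ^ unitary_part n (?I - W) - 1"
      by (subst exp_of_real) simp
    then show ?thesis
      using prod_diff_cis_multiples[OF unitary_part_mult_complement[OF assms(1) that] assms(1)]
      by (simp add: exp_sum exp_f)
  qed
  have "poly (unitary_cyclotomic n) (of_real x) = (\<Prod>j \<in> {j \<in> {1..n}. unitary_support n j = {}}. exp (f j))"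
    unfolding unitary_cyclotomic_def unitary_gcd_eq_1_iff[OF assms(1)] by (simp add: poly_prod exp_f)
  also have "\<dots> = exp (\<Sum>j \<in> {j \<in> {1..n}. unitary_support n j = {}}. f j)"
    by (simp add: exp_sum)
  also have "(\<Sum>j \<in> {j \<in> {1..n}. unitary_support n j = {}}. f j) =
      (\<Sum>W\<in>Pow ?I. (-1) ^ card W * (\<Sum>j \<in> {j \<in> {1..n}. W \<subseteq> unitary_support n j}. f j))"
    by (rule sum_fiber_inclusion_exclusion[where T = "{}", unfolded Un_empty_left Diff_empty])
      (auto simp: unitary_support_def)
  also have "\<dots> = (\<Sum>W\<in>Pow ?I. (-1) ^ card W * (\<Sum>j \<in> {j \<in> {1..n}. unitary_part n W dvd j}. f j))"
    by (intro sum.cong refl) (simp add: subset_unitary_support_iff)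
  also have "exp (\<Sum>W\<in>Pow ?I. (-1) ^ card W * (\<Sum>j \<in> {j \<in> {1..n}. unitary_part n W dvd j}. f j)) =
      (\<Prod>W\<in>Pow ?I. exp ((-1) ^ card W * of_real (ln (x ^ unitary_part n (?I - W) - 1))))"
    by (simp only: exp_sum finite_Pow_iff finite_set_mset)
      (intro prod.cong refl exp_mult_neg_one_power_cong multiples, blast)
  also have "\<dots> = of_real (exp (\<Sum>W\<in>Pow ?I. (-1) ^ card W * ln (x ^ unitary_part n (?I - W) - 1)))"
    by (simp add: exp_sum flip: exp_of_real)
  finally show ?thesis .
qed

lemma prod_powr_cos_unitary_gcd:
  assumes "n > 0" "x > 1"
  shows "(\<Prod>j=1..n. (x ^ unitary_gcd j n - 1) powr cos (2 * pi * real j / real n)) = exp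
    (\<Sum>W\<in>Pow (prime_factors n). (-1) ^ card W * ln (x ^ unitary_part n (prime_factors n - W) - 1))"
proof -
  let ?I = "prime_factors n"
  define \<theta> where "\<theta> j = 2 * pi * real j / real n" for j
  define h where "h V = ln (x ^ unitary_part n V - 1)" for V
  have "(\<Prod>j=1..n. (x ^ unitary_gcd j n - 1) powr cos (\<theta> j)) =
      exp (\<Sum>j=1..n. cos (\<theta> j) * h (unitary_support n j))"
  proof -
    have "(x ^ unitary_gcd j n - 1) powr cos (\<theta> j) = exp (cos (\<theta> j) * h (unitary_support n j))" for j
    proof -
      have "x ^ unitary_gcd j n > 1"
        using assms(2) unitary_part_pos[of "unitary_support n j" n]
        by (auto simp: unitary_gcd_eq_unitary_part[OF assms(1)] unitary_support_def intro: one_less_power)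
      then show ?thesis
        by (simp add: powr_def h_def unitary_gcd_eq_unitary_part[OF assms(1)])
    qed
    then show ?thesis
      by (simp add: exp_sum)
  qed
  also have "(\<Sum>j=1..n. cos (\<theta> j) * h (unitary_support n j)) =
      (\<Sum>V\<in>Pow ?I. h V * (\<Sum>j \<in> {j \<in> {1..n}. unitary_support n j = V}. cos (\<theta> j)))"
    by (subst sum.group[symmetric, where g = "unitary_support n"])
      (auto simp: unitary_support_def sum_distrib_left mult.commute intro!: sum.cong)
  also have "\<dots> = (\<Sum>V\<in>Pow ?I. h V * (-1) ^ card (?I - V))"
    by (intro sum.cong refl) (simp only: \<theta>_def Pow_iff sum_cos_unitary_support[OF assms(1)])
  also have "\<dots> = (\<Sum>W\<in>Pow ?I. h (?I - W) * (-1) ^ card W)"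
    by (rule sum.reindex_bij_witness[where i = "\<lambda>V. ?I - V" and j = "\<lambda>W. ?I - W"]) (auto simp: double_diff)
  finally show ?thesis
    by (simp add: \<theta>_def h_def mult.commute)
qed

theorem theorem4p5:
  fixes x :: real and n :: nat
  assumes "x > 1"
  shows "poly (unitary_cyclotomic n) (complex_of_real x) =
    complex_of_real (\<Prod>j=1..n. (x ^ unitary_gcd j n - 1) powr cos (2 * pi * real j / real n))"
proof (cases "n = 0")
  case True
  then show ?thesis
    by (simp add: unitary_cyclotomic_def)
next
  case False
  then show ?thesis
    using poly_unitary_cyclotomic_of_real[of n x] prod_powr_cos_unitary_gcd[of n x] assms by simp
qed

end
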